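(* Let $C$ be a closed cone with nonempty interior $\operatorname{int} C$ in a real Banach space $X$. If $f:\operatorname{int} C\to\operatorname{int} C$ is nonexpansive with respect to Thompson's metric $d_T$, then for every $0<\alpha<1$ the map $\alpha f+(1-\alpha)\operatorname{id}$ is also nonexpansive on $(\operatorname{int} C,d_T)$.
   Context: A closed cone is a closed convex set $C\subset X$ with $\lambda C\subseteq C$ for all $\lambda\ge 0$ and $C\cap(-C)=\{0\}$. It induces the partial order $x\le y$ iff $y-x\in C$. For $x,y\in C$, $M(x/y)=\inf\{\beta>0: x\le \beta y\}$. For $x,y\in\operatorname{int} C$, Thompson's metric is $d_T(x,y)=\log\max\{M(x/y),M(y/x)\}=\log\inf\{\beta\ge 1:\beta^{-1}x\le y\le \beta x\}$. A map $g$ is $d_T$-nonexpansive if $d_T(g(x),g(y))\le d_T(x,y)$ for all $x,y$. *)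

theory Defs
  imports "HOL-Analysis.Analysis"
begin

definition closed_cone :: "'a::real_normed_vector set \<Rightarrow> bool" where
  "closed_cone C \<longleftrightarrow> closed C \<and> convex C \<and>
     (\<forall>c::real. \<forall>x\<in>C. c \<ge> 0 \<longrightarrow> c *\<^sub>R x \<in> C) \<and>
     C \<inter> uminus ` C = {0}"

definition cone_le :: "'a::real_normed_vector set \<Rightarrow> 'a \<Rightarrow> 'a \<Rightarrow> bool" where
  "cone_le C x y \<longleftrightarrow> y - x \<in> C"

definition coneM :: "'a::real_normed_vector set \<Rightarrow> 'a \<Rightarrow> 'a \<Rightarrow> real" where
  "coneM C x y = Inf {\<beta>::real. \<beta> > 0 \<and> cone_le C x (\<beta> *\<^sub>R y)}"

definition thompson :: "'a::real_normed_vector set \<Rightarrow> 'a \<Rightarrow> 'a \<Rightarrow> real" where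
  "thompson C x y = ln (max (coneM C x y) (coneM C y x))"

end

theory Submission
  imports Defs
begin

text \<open>The cone order is compatible with nonnegative linear combinations, so \<open>x \<le> \<beta> y\<close> and
  \<open>f x \<le> \<beta> f y\<close> give \<open>\<alpha> f x + (1 - \<alpha>) x \<le> \<beta> (\<alpha> f y + (1 - \<alpha>) y)\<close>. Hence \<open>M\<close> of the
  combinations is at most \<open>max (M(x/y), M(f x/f y))\<close>, which nonexpansiveness of \<open>f\<close> bounds by
  \<open>exp (d\<^sub>T(x, y))\<close>. Since \<open>x \<le> b y \<le> b\<^sup>2 x\<close> with \<open>b < 1\<close> forces \<open>x = 0\<close>, the maxima in \<open>d\<^sub>T\<close> are
  at least \<open>1\<close> as soon as \<open>0\<close> is not an interior point; if it is, the space is trivial.\<close>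

lemma closed_cone_scaleR: "closed_cone C \<Longrightarrow> x \<in> C \<Longrightarrow> c \<ge> 0 \<Longrightarrow> c *\<^sub>R x \<in> C"
  unfolding closed_cone_def by blast

lemma closed_cone_add:
  assumes "closed_cone C" "x \<in> C" "y \<in> C"
  shows "x + y \<in> C"
proof -
  have "convex C" using assms(1) unfolding closed_cone_def by blast
  then have "(1/2::real) *\<^sub>R x + (1/2::real) *\<^sub>R y \<in> C"
    using assms(2,3) by (rule convexD) auto
  from closed_cone_scaleR[OF assms(1) this, of 2] show ?thesis
    by (simp add: scaleR_add_right)
qed

lemma closed_cone_eq_0:
  assumes "closed_cone C" "x \<in> C" "- x \<in> C"
  shows "x = 0"
proof -
  have "x \<in> C \<inter> uminus ` C" using assms(2,3) by (auto intro: image_eqI[of x uminus "- x"])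
  then show ?thesis using assms(1) unfolding closed_cone_def by blast
qed

lemma cone_le_add:
  "closed_cone C \<Longrightarrow> cone_le C x y \<Longrightarrow> cone_le C x' y' \<Longrightarrow> cone_le C (x + x') (y + y')"
  unfolding cone_le_def by (drule (2) closed_cone_add) (simp add: algebra_simps)

lemma cone_le_scaleR:
  "closed_cone C \<Longrightarrow> cone_le C x y \<Longrightarrow> c \<ge> 0 \<Longrightarrow> cone_le C (c *\<^sub>R x) (c *\<^sub>R y)"
  unfolding cone_le_def by (drule (2) closed_cone_scaleR) (simp add: scaleR_diff_right)

lemma cone_le_trans:
  "closed_cone C \<Longrightarrow> cone_le C x y \<Longrightarrow> cone_le C y z \<Longrightarrow> cone_le C x z"
  using cone_le_add[of C x y y z] unfolding cone_le_def by (simp add: algebra_simps)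

lemma cone_le_combination:
  assumes "closed_cone C" "cone_le C x (\<beta> *\<^sub>R y)" "cone_le C x' (\<beta> *\<^sub>R y')" "a \<ge> 0" "b \<ge> 0"
  shows "cone_le C (a *\<^sub>R x + b *\<^sub>R x') (\<beta> *\<^sub>R (a *\<^sub>R y + b *\<^sub>R y'))"
  using cone_le_add[OF assms(1) cone_le_scaleR[OF assms(1,2,4)] cone_le_scaleR[OF assms(1,3,5)]]
  by (simp add: algebra_simps)

lemma cone_le_scaleR_mono:
  assumes "closed_cone C" "y \<in> C" "cone_le C x (\<beta> *\<^sub>R y)" "\<beta> \<le> \<beta>'"
  shows "cone_le C x (\<beta>' *\<^sub>R y)"
proof -
  have "cone_le C (\<beta> *\<^sub>R y) (\<beta>' *\<^sub>R y)"
    using closed_cone_scaleR[OF assms(1,2), of "\<beta>' - \<beta>"] assms(4)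
    unfolding cone_le_def by (simp add: algebra_simps)
  with assms(1,3) show ?thesis by (rule cone_le_trans)
qed

lemma cone_le_self_scaleR_imp_0:
  assumes "closed_cone C" "x \<in> C" "cone_le C x (t *\<^sub>R x)" "t < 1"
  shows "x = 0"
proof -
  have "(1 / (1 - t)) *\<^sub>R (t *\<^sub>R x - x) \<in> C"
    using assms closed_cone_scaleR[OF assms(1)] unfolding cone_le_def by simp
  moreover have "(1 / (1 - t)) *\<^sub>R (t *\<^sub>R x - x) = ((t - 1) / (1 - t)) *\<^sub>R x"
    by (simp add: scaleR_diff_left scaleR_diff_right diff_divide_distrib)
  moreover have "(t - 1) / (1 - t) = -1" using assms(4) by (simp add: divide_simps)
  ultimately show ?thesis using closed_cone_eq_0[OF assms(1,2)] by simp
qed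

lemma interior_cone_dominates:
  assumes "closed_cone C" "y \<in> interior C"
  shows "\<exists>\<beta>>0. cone_le C x (\<beta> *\<^sub>R y)"
proof -
  obtain r where r: "r > 0" "ball y r \<subseteq> C" using assms(2) by (meson mem_interior)
  define \<beta> where "\<beta> = (norm x + 1) / r"
  have \<beta>: "\<beta> > 0" using r unfolding \<beta>_def by (simp add: add_nonneg_pos)
  have "norm ((1 / \<beta>) *\<^sub>R x) = r * (norm x / (norm x + 1))"
    using r unfolding \<beta>_def by simp
  also have "\<dots> < r * 1" using r by (intro mult_strict_left_mono) (simp_all add: add_nonneg_pos)
  finally have "y - (1 / \<beta>) *\<^sub>R x \<in> C" using r by (auto simp: dist_norm)
  from closed_cone_scaleR[OF assms(1) this, of \<beta>] \<beta> have "cone_le C x (\<beta> *\<^sub>R y)"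
    unfolding cone_le_def by (simp add: scaleR_diff_right)
  with \<beta> show ?thesis by blast
qed

lemma closed_cone_trivial_if_0_interior:
  fixes C :: "'a::real_normed_vector set" and v :: 'a
  assumes "closed_cone C" "0 \<in> interior C"
  shows "v = 0"
proof -
  have "- x \<in> C" for x
    using interior_cone_dominates[OF assms, of x] unfolding cone_le_def by auto
  from this[of v] this[of "- v"] show ?thesis using closed_cone_eq_0[OF assms(1)] by simp
qed

lemma coneM_nonneg:
  assumes "closed_cone C" "y \<in> interior C"
  shows "coneM C x y \<ge> 0"
  unfolding coneM_def using interior_cone_dominates[OF assms, of x]
  by (intro cInf_greatest) auto

lemma cone_le_if_coneM_less:
  assumes "closed_cone C" "y \<in> interior C" "coneM C x y < \<beta>"
  shows "cone_le C x (\<beta> *\<^sub>R y)"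
proof -
  let ?S = "{\<beta>::real. \<beta> > 0 \<and> cone_le C x (\<beta> *\<^sub>R y)}"
  have "?S \<noteq> {}" using interior_cone_dominates[OF assms(1,2), of x] by auto
  then obtain s where s: "s > 0" "cone_le C x (s *\<^sub>R y)" "s < \<beta>"
    using cInf_lessD[of ?S \<beta>] assms(3) unfolding coneM_def by blast
  have "y \<in> C" using assms(2) interior_subset by blast
  from cone_le_scaleR_mono[OF assms(1) this s(2)] s(3) show ?thesis by simp
qed

lemma coneM_leI:
  assumes "m \<ge> 0" "\<And>\<beta>. m < \<beta> \<Longrightarrow> cone_le C x (\<beta> *\<^sub>R y)"
  shows "coneM C x y \<le> m"
proof (rule dense_ge)
  fix \<beta> assume "m < \<beta>"
  with assms have "\<beta> \<in> {\<beta>::real. \<beta> > 0 \<and> cone_le C x (\<beta> *\<^sub>R y)}" by simp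
  then show "coneM C x y \<le> \<beta>"
    unfolding coneM_def by (rule cInf_lower) (auto intro: bdd_belowI[of _ 0])
qed

lemma coneM_combination_le:
  assumes "closed_cone C" "y \<in> interior C" "y' \<in> interior C" "a \<ge> 0" "b \<ge> 0"
  shows "coneM C (a *\<^sub>R x + b *\<^sub>R x') (a *\<^sub>R y + b *\<^sub>R y') \<le> max (coneM C x y) (coneM C x' y')"
proof (rule coneM_leI)
  show "0 \<le> max (coneM C x y) (coneM C x' y')" using coneM_nonneg[OF assms(1,2), of x] by linarith
  fix \<beta> assume "max (coneM C x y) (coneM C x' y') < \<beta>"
  then show "cone_le C (a *\<^sub>R x + b *\<^sub>R x') (\<beta> *\<^sub>R (a *\<^sub>R y + b *\<^sub>R y'))"
    using assms by (intro cone_le_combination cone_le_if_coneM_less) auto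
qed

lemma one_le_max_coneM:
  assumes "closed_cone C" "0 \<notin> interior C" "x \<in> interior C" "y \<in> interior C"
  shows "1 \<le> max (coneM C x y) (coneM C y x)"
proof (rule ccontr)
  let ?m = "max (coneM C x y) (coneM C y x)"
  define b where "b = (?m + 1) / 2"
  assume "\<not> 1 \<le> ?m"
  moreover have "0 \<le> ?m" using coneM_nonneg[OF assms(1,4), of x] by linarith
  ultimately have b: "0 \<le> b" "b < 1" "coneM C x y < b" "coneM C y x < b"
    unfolding b_def by auto
  have "cone_le C x (b *\<^sub>R y)" "cone_le C y (b *\<^sub>R x)"
    using cone_le_if_coneM_less assms b by auto
  then have "cone_le C x ((b * b) *\<^sub>R x)"
    using cone_le_trans cone_le_scaleR assms(1) b(1) by fastforce
  moreover have "b * b < 1" using mult_strict_mono[of b 1 b 1] b by simp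
  ultimately have "x = 0"
    using cone_le_self_scaleR_imp_0 assms(1,3) interior_subset by blast
  with assms(2,3) show False by simp
qed

lemma thompson_le_thompson_iff:
  assumes "closed_cone C" "0 \<notin> interior C"
    and "x \<in> interior C" "y \<in> interior C" "x' \<in> interior C" "y' \<in> interior C"
  shows "thompson C x' y' \<le> thompson C x y \<longleftrightarrow>
           max (coneM C x' y') (coneM C y' x') \<le> max (coneM C x y) (coneM C y x)"
  unfolding thompson_def
  using one_le_max_coneM[OF assms(1,2,3,4)] one_le_max_coneM[OF assms(1,2,5,6)]
  by (intro ln_le_cancel_iff) auto

theorem lemma2p1:
  fixes C :: "'a::banach set" and f :: "'a \<Rightarrow> 'a" and \<alpha> :: real
  assumes "closed_cone C"
    and "interior C \<noteq> {}"
    and "f ` interior C \<subseteq> interior C"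
    and "\<forall>x\<in>interior C. \<forall>y\<in>interior C. thompson C (f x) (f y) \<le> thompson C x y"
    and "0 < \<alpha>" and "\<alpha> < 1"
  shows "\<forall>x\<in>interior C. \<forall>y\<in>interior C.
           thompson C (\<alpha> *\<^sub>R f x + (1 - \<alpha>) *\<^sub>R x) (\<alpha> *\<^sub>R f y + (1 - \<alpha>) *\<^sub>R y)
             \<le> thompson C x y"
proof (cases "0 \<in> interior C")
  case True
  then show ?thesis using closed_cone_trivial_if_0_interior[OF assms(1)] by (metis order_refl)
next
  case False
  let ?g = "\<lambda>x. \<alpha> *\<^sub>R f x + (1 - \<alpha>) *\<^sub>R x"
  have "convex (interior C)" using assms(1) unfolding closed_cone_def by (simp add: convex_interior)
  then have g_interior: "?g x \<in> interior C" if "x \<in> interior C" for x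
    using assms(3,5,6) that by (intro convexD) auto
  show ?thesis
  proof (intro ballI)
    fix x y assume x: "x \<in> interior C" and y: "y \<in> interior C"
    have fx: "f x \<in> interior C" and fy: "f y \<in> interior C" using assms(3) x y by auto
    have f_le: "max (coneM C (f x) (f y)) (coneM C (f y) (f x)) \<le> max (coneM C x y) (coneM C y x)"
      using assms(4) x y thompson_le_thompson_iff[OF assms(1) False x y fx fy] by blast
    have "coneM C (?g x) (?g y) \<le> max (coneM C (f x) (f y)) (coneM C x y)"
      and "coneM C (?g y) (?g x) \<le> max (coneM C (f y) (f x)) (coneM C y x)"
      using coneM_combination_le[OF assms(1) fy y] coneM_combination_le[OF assms(1) fx x] assms(5,6)
      by simp_all
    with f_le show "thompson C (?g x) (?g y) \<le> thompson C x y"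
      using thompson_le_thompson_iff[OF assms(1) False x y g_interior g_interior] x y by auto
  qed
qed

end
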